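(* Let $X$ be a nonempty countable set, $\mathcal D$ a distribution on $X$, $\rho$ a cost function on $X$ of finite degree $d\ge1$, $m\ge1$, and $\mu\in\mathscr D^{m,\rho,\mathcal D}_{\mathrm{adaptive}}$. Let $S'\sim\mu$ and let $r$ be an integer with $0\le r<m$. Then $$\mathbb E_{i,B}\big[I(S'_i;S'_B)\big]\le\frac{m}{m-r}\ln d,$$ where $i$ is uniform on $[m]$ and $B$ is a uniformly random $r$-element subset of $[m]\setminus\{i\}$.
   Context: A cost function on $X$ is $\rho:X\times X\to\mathbb R_{\ge0}\cup\{\infty\}$ with $\rho(x,x)=0$; its degree is $\sup_x\#\{y:\rho(x,y)\ne\infty\}$. For $S\in X^m$, $\mathcal C_\rho(S)=\{S'\in X^m:\frac1m\sum_i\rho(S_i,S'_i)\le1\}$. $\mathscr D^{m,\rho,\mathcal D}_{\mathrm{adaptive}}$ is the set of distributions $\mu$ on $X^m$ for which there is a coupling of $S'\sim\mu$ and $S\sim\mathcal D^m$ with $S'\in\mathcal C_\rho(S)$ almost surely. $S'_B=(S'_b)_{b\in B}$; $I$ is mutual information in nats. *)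

theory Defs
  imports "HOL-Probability.Probability"
begin

definition cost_function :: "('a \<Rightarrow> 'a \<Rightarrow> ennreal) \<Rightarrow> bool" where
  "cost_function \<rho> \<longleftrightarrow> (\<forall>x. \<rho> x x = 0)"

definition cost_degree :: "('a \<Rightarrow> 'a \<Rightarrow> ennreal) \<Rightarrow> enat" where
  "cost_degree \<rho> = (SUP x. if finite {y. \<rho> x y \<noteq> \<top>} then enat (card {y. \<rho> x y \<noteq> \<top>}) else \<infinity>)"

definition cost_ball :: "('a \<Rightarrow> 'a \<Rightarrow> ennreal) \<Rightarrow> nat \<Rightarrow> 'a list \<Rightarrow> 'a list set" where
  "cost_ball \<rho> m S = {S'. length S' = m \<and>
      (1 / of_nat m) * (\<Sum>i<m. \<rho> (S ! i) (S' ! i)) \<le> (1::ennreal)}"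

definition adaptive_class :: "nat \<Rightarrow> ('a \<Rightarrow> 'a \<Rightarrow> ennreal) \<Rightarrow> 'a pmf \<Rightarrow> 'a list pmf set" where
  "adaptive_class m \<rho> D = {\<mu>. set_pmf \<mu> \<subseteq> {xs. length xs = m} \<and>
      (\<exists>c :: ('a list \<times> 'a list) pmf.
          map_pmf fst c = \<mu> \<and> map_pmf snd c = replicate_pmf m D \<and>
          (\<forall>(S', S) \<in> set_pmf c. S' \<in> cost_ball \<rho> m S))}"

text \<open>Mutual information (in nats) of the two components of a discrete joint distribution p,
  with values in [0,\<infinity>]:
  I = sum over (x,y) of  q ln (q / (a b)) - q + a b,  where q = p(x,y), a = p(x), b = p(y).
  Since the q and the a b both sum to 1, this equals the usual sum of q ln(q/(a b)); the
  rewriting makes every summand nonnegative so the (possibly infinite) sum is well defined.\<close>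

definition kl_term :: "real \<Rightarrow> real \<Rightarrow> real" where
  "kl_term q t = (if q = 0 then t else q * ln (q / t) - q + t)"

definition mutual_info_pmf :: "('a \<times> 'b) pmf \<Rightarrow> ennreal" where
  "mutual_info_pmf p =
     (\<integral>\<^sup>+ z. ennreal (kl_term (pmf p z)
                 (pmf (map_pmf fst p) (fst z) * pmf (map_pmf snd p) (snd z))) \<partial>count_space UNIV)"

definition MI_coord_block :: "'a list pmf \<Rightarrow> nat \<Rightarrow> nat set \<Rightarrow> ennreal" where
  "MI_coord_block \<mu> i B =
     mutual_info_pmf (map_pmf (\<lambda>S. (S ! i, map (\<lambda>b. S ! b) (sorted_list_of_set B))) \<mu>)"

end

theory Submission
  imports Defs
begin

text \<open>Couple \<open>S' \<sim> \<mu>\<close> with an i.i.d. sample \<open>S \<sim> D\<^sup>m\<close> so that every \<open>S'_j\<close> lies in the set of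
  at most \<open>d\<close> points of finite cost from \<open>S_j\<close>. For a fixed \<open>r\<close>-set \<open>B\<close> and \<open>i \<notin> B\<close>, knowing
  \<open>S_i\<close> leaves at most \<open>ln d\<close> nats of uncertainty in \<open>S'_i\<close>, so
  \<open>I(S'_i; S'_B) \<le> ln d + I(S_i; (S'_B, S_B))\<close>. The \<open>S_i\<close> are independent, hence
  \<open>\<Sum>_(i\<notin>B) I(S_i; (S'_B, S_B)) \<le> I(S_([m]-B); (S'_B, S_B)) \<le> |B| ln d\<close>, and altogether
  \<open>\<Sum>_(i\<notin>B) I(S'_i; S'_B) \<le> m ln d\<close>. Averaging over \<open>B\<close> and using
  \<open>(m - r) C(m, r) = m C(m - 1, r)\<close> gives the bound. The entropy calculus needs finite support;
  the countable case follows by truncating the sample to finitely many points of the type and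
  passing to the limit term by term in the series defining the mutual information.\<close>

section \<open>Entropy of finite distributions\<close>

lemma restrict_eq_restrict_iff: "restrict f A = restrict g A \<longleftrightarrow> (\<forall>x\<in>A. f x = g x)"
  unfolding restrict_def fun_eq_iff by (metis (full_types))

locale fin_distr =
  fixes S :: "'w set" and p :: "'w \<Rightarrow> real"
  assumes finite_support: "finite S"
    and weight_pos: "\<And>w. w \<in> S \<Longrightarrow> p w > 0"
    and sum_weight: "sum p S = 1"
begin

definition fiber_prob :: "('w \<Rightarrow> 'v) \<Rightarrow> 'w \<Rightarrow> real" where
  "fiber_prob f w = sum p {w'\<in>S. f w' = f w}"

definition entropy :: "('w \<Rightarrow> 'v) \<Rightarrow> real" where
  "entropy f = (\<Sum>w\<in>S. p w * - ln (fiber_prob f w))"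

definition mutual_info :: "('w \<Rightarrow> 'u) \<Rightarrow> ('w \<Rightarrow> 'v) \<Rightarrow> real" where
  "mutual_info f g = entropy f + entropy g - entropy (\<lambda>w. (f w, g w))"

lemma weight_nonneg: "w \<in> S \<Longrightarrow> p w \<ge> 0"
  using weight_pos[of w] by simp

lemma fiber_prob_pos: "w \<in> S \<Longrightarrow> fiber_prob f w > 0"
  unfolding fiber_prob_def
  by (rule sum_pos2[of _ w]) (use finite_support weight_pos in \<open>auto intro: less_imp_le\<close>)

lemma fiber_prob_mono:
  assumes "w \<in> S" "\<And>w'. w' \<in> S \<Longrightarrow> g w' = g w \<Longrightarrow> f w' = f w"
  shows "fiber_prob g w \<le> fiber_prob f w"
  unfolding fiber_prob_def
  by (rule sum_mono2) (use finite_support assms(2) weight_nonneg in auto)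

lemma fiber_prob_cong:
  assumes "\<And>w'. w' \<in> S \<Longrightarrow> g w' = g w \<longleftrightarrow> f w' = f w"
  shows "fiber_prob g w = fiber_prob f w"
  unfolding fiber_prob_def using assms by (metis (lifting) Collect_cong)

lemma entropy_mono:
  assumes "\<And>w w'. w \<in> S \<Longrightarrow> w' \<in> S \<Longrightarrow> g w' = g w \<Longrightarrow> f w' = f w"
  shows "entropy f \<le> entropy g"
  unfolding entropy_def
proof (rule sum_mono)
  fix w assume w: "w \<in> S"
  have "fiber_prob g w \<le> fiber_prob f w" using fiber_prob_mono[OF w] assms w by blast
  hence "ln (fiber_prob g w) \<le> ln (fiber_prob f w)"
    using fiber_prob_pos[OF w, of g] by simp
  thus "p w * - ln (fiber_prob f w) \<le> p w * - ln (fiber_prob g w)"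
    using weight_nonneg[OF w] by (intro mult_left_mono) auto
qed

lemma entropy_cong:
  assumes "\<And>w w'. w \<in> S \<Longrightarrow> w' \<in> S \<Longrightarrow> g w' = g w \<longleftrightarrow> f w' = f w"
  shows "entropy f = entropy g"
  by (rule antisym; rule entropy_mono) (use assms in blast)+

lemma entropy_const: "entropy (\<lambda>_. c) = 0"
  unfolding entropy_def fiber_prob_def using sum_weight by simp

lemma sum_weight_fibers:
  assumes "f ` T \<subseteq> A" "finite A" "T \<subseteq> S"
  shows "(\<Sum>a\<in>A. sum p {w\<in>T. f w = a}) = sum p T"
  by (rule sum.group) (use assms finite_support finite_subset in auto)

lemma sum_regroup_fibers:
  "(\<Sum>w\<in>S. p w * G (h w)) = (\<Sum>v\<in>h ` S. sum p {w\<in>S. h w = v} * G v)"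
proof -
  have "(\<Sum>w\<in>S. p w * G (h w)) = (\<Sum>v\<in>h ` S. \<Sum>w\<in>{w\<in>S. h w = v}. p w * G (h w))"
    by (rule sum.image_gen[OF finite_support])
  also have "\<dots> = (\<Sum>v\<in>h ` S. sum p {w\<in>S. h w = v} * G v)"
    by (rule sum.cong[OF refl]) (simp add: sum_distrib_right)
  finally show ?thesis .
qed

lemma entropy_le_cross_entropy:
  assumes Q_pos: "\<And>w. w \<in> S \<Longrightarrow> Q (h w) > 0" and Q_sum: "sum Q (h ` S) \<le> 1"
  shows "entropy h \<le> (\<Sum>w\<in>S. p w * - ln (Q (h w)))"
proof -
  have "(\<Sum>w\<in>S. p w * ln (Q (h w) / fiber_prob h w))
      \<le> (\<Sum>w\<in>S. p w * (Q (h w) / fiber_prob h w - 1))"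
  proof (rule sum_mono)
    fix w assume w: "w \<in> S"
    have "ln (Q (h w) / fiber_prob h w) \<le> Q (h w) / fiber_prob h w - 1"
      by (rule ln_le_minus_one) (use Q_pos[OF w] fiber_prob_pos[OF w, of h] in simp)
    thus "p w * ln (Q (h w) / fiber_prob h w) \<le> p w * (Q (h w) / fiber_prob h w - 1)"
      using weight_nonneg[OF w] by (intro mult_left_mono) auto
  qed
  also have "\<dots> = (\<Sum>w\<in>S. p w * (Q (h w) / sum p {w'\<in>S. h w' = h w})) - 1"
    unfolding right_diff_distrib mult_1_right sum_subtractf sum_weight fiber_prob_def ..
  also have "(\<Sum>w\<in>S. p w * (Q (h w) / sum p {w'\<in>S. h w' = h w}))
     = (\<Sum>v\<in>h ` S. sum p {w\<in>S. h w = v} * (Q v / sum p {w'\<in>S. h w' = v}))"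
    by (rule sum_regroup_fibers)
  also have "\<dots> = sum Q (h ` S)"
  proof (rule sum.cong[OF refl])
    fix v assume "v \<in> h ` S"
    then obtain w where "w \<in> S" "h w = v" by auto
    hence "sum p {w\<in>S. h w = v} > 0" using fiber_prob_pos[of w h] unfolding fiber_prob_def by simp
    thus "sum p {w\<in>S. h w = v} * (Q v / sum p {w'\<in>S. h w' = v}) = Q v" by simp
  qed
  finally have "(\<Sum>w\<in>S. p w * ln (Q (h w) / fiber_prob h w)) \<le> 0" using Q_sum by linarith
  moreover have "(\<Sum>w\<in>S. p w * ln (Q (h w) / fiber_prob h w))
      = entropy h - (\<Sum>w\<in>S. p w * - ln (Q (h w)))"
    unfolding entropy_def sum_subtractf[symmetric]
  proof (rule sum.cong[OF refl])
    fix w assume w: "w \<in> S"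
    show "p w * ln (Q (h w) / fiber_prob h w) = p w * - ln (fiber_prob h w) - p w * - ln (Q (h w))"
      using Q_pos[OF w] fiber_prob_pos[OF w, of h] by (simp add: ln_div algebra_simps)
  qed
  ultimately show ?thesis by linarith
qed

text \<open>The sub-probability weight \<open>P(a,e) P(b,e) / P(e)\<close> is the law of \<open>(f, g, k)\<close> if \<open>f\<close> and
  \<open>g\<close> were conditionally independent given \<open>k\<close>.\<close>

lemma sum_cond_indep_weight_le_1:
  "(\<Sum>(a, b, e)\<in>(\<lambda>w. (f w, g w, k w)) ` S.
      sum p {w\<in>S. f w = a \<and> k w = e} * sum p {w\<in>S. g w = b \<and> k w = e} / sum p {w\<in>S. k w = e})
    \<le> 1"
proof -
  define Pfk where "Pfk a e = sum p {w\<in>S. f w = a \<and> k w = e}" for a e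
  define Pgk where "Pgk b e = sum p {w\<in>S. g w = b \<and> k w = e}" for b e
  define Pk where "Pk e = sum p {w\<in>S. k w = e}" for e
  have fin_img: "finite (f ` S)" "finite (g ` S)" "finite (k ` S)" using finite_support by auto
  have sum_Pfk: "(\<Sum>a\<in>f ` S. Pfk a e) = Pk e" for e
  proof -
    have "Pfk a e = sum p {w\<in>{w\<in>S. k w = e}. f w = a}" for a
      unfolding Pfk_def by (rule sum.cong) auto
    moreover have "(\<Sum>a\<in>f ` S. sum p {w\<in>{w\<in>S. k w = e}. f w = a}) = Pk e"
      unfolding Pk_def by (rule sum_weight_fibers) (use fin_img in auto)
    ultimately show ?thesis by simp
  qed
  have sum_Pgk: "(\<Sum>b\<in>g ` S. Pgk b e) = Pk e" for e
  proof -
    have "Pgk b e = sum p {w\<in>{w\<in>S. k w = e}. g w = b}" for b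
      unfolding Pgk_def by (rule sum.cong) auto
    moreover have "(\<Sum>b\<in>g ` S. sum p {w\<in>{w\<in>S. k w = e}. g w = b}) = Pk e"
      unfolding Pk_def by (rule sum_weight_fibers) (use fin_img in auto)
    ultimately show ?thesis by simp
  qed
  have "(\<Sum>(a, b, e)\<in>(\<lambda>w. (f w, g w, k w)) ` S. Pfk a e * Pgk b e / Pk e)
      \<le> (\<Sum>(a, b, e)\<in>f ` S \<times> (g ` S \<times> k ` S). Pfk a e * Pgk b e / Pk e)"
    unfolding Pfk_def Pgk_def Pk_def
    by (rule sum_mono2) (auto simp: fin_img intro!: divide_nonneg_nonneg mult_nonneg_nonneg
        sum_nonneg weight_nonneg)
  also have "\<dots> = (\<Sum>a\<in>f ` S. \<Sum>b\<in>g ` S. \<Sum>e\<in>k ` S. Pfk a e * Pgk b e / Pk e)"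
    by (simp add: sum.cartesian_product)
  also have "\<dots> = (\<Sum>e\<in>k ` S. \<Sum>a\<in>f ` S. \<Sum>b\<in>g ` S. Pfk a e * Pgk b e / Pk e)"
    by (subst sum.swap) (rule sum.cong[OF refl], rule sum.swap)
  also have "\<dots> = (\<Sum>e\<in>k ` S. Pk e * Pk e / Pk e)"
    by (simp only: sum_product[symmetric] sum_divide_distrib[symmetric] sum_Pfk sum_Pgk)
  also have "\<dots> \<le> (\<Sum>e\<in>k ` S. Pk e)"
    by (rule sum_mono) simp
  also have "\<dots> = 1"
    unfolding Pk_def by (simp add: sum_weight_fibers fin_img sum_weight)
  finally show ?thesis unfolding Pfk_def Pgk_def Pk_def .
qed

lemma entropy_submodular:
  "entropy (\<lambda>w. (f w, g w, k w)) + entropy k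
     \<le> entropy (\<lambda>w. (f w, k w)) + entropy (\<lambda>w. (g w, k w))"
proof -
  define Q where "Q = (\<lambda>(a, b, e). sum p {w\<in>S. f w = a \<and> k w = e}
      * sum p {w\<in>S. g w = b \<and> k w = e} / sum p {w\<in>S. k w = e})"
  have Q_eq: "Q (f w, g w, k w)
      = fiber_prob (\<lambda>w. (f w, k w)) w * fiber_prob (\<lambda>w. (g w, k w)) w / fiber_prob k w" for w
    unfolding Q_def fiber_prob_def by simp
  have Q_sum: "sum Q ((\<lambda>w. (f w, g w, k w)) ` S) \<le> 1"
    unfolding Q_def by (rule sum_cond_indep_weight_le_1)
  have "entropy (\<lambda>w. (f w, g w, k w)) \<le> (\<Sum>w\<in>S. p w * - ln (Q (f w, g w, k w)))"
    by (rule entropy_le_cross_entropy[where Q = Q and h = "\<lambda>w. (f w, g w, k w)", OF _ Q_sum])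
      (simp add: Q_eq fiber_prob_pos)
  also have "\<dots> = entropy (\<lambda>w. (f w, k w)) + entropy (\<lambda>w. (g w, k w)) - entropy k"
    unfolding entropy_def sum.distrib[symmetric] sum_subtractf[symmetric]
  proof (rule sum.cong[OF refl])
    fix w assume w: "w \<in> S"
    have ln_eq: "ln (Q (f w, g w, k w)) = ln (fiber_prob (\<lambda>w. (f w, k w)) w)
        + ln (fiber_prob (\<lambda>w. (g w, k w)) w) - ln (fiber_prob k w)"
      unfolding Q_eq using fiber_prob_pos[OF w, of k]
        fiber_prob_pos[OF w, of "\<lambda>w. (f w, k w)"] fiber_prob_pos[OF w, of "\<lambda>w. (g w, k w)"]
      by (simp add: ln_div ln_mult)
    show "p w * - ln (Q (f w, g w, k w)) = p w * - ln (fiber_prob (\<lambda>w. (f w, k w)) w)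
        + p w * - ln (fiber_prob (\<lambda>w. (g w, k w)) w) - p w * - ln (fiber_prob k w)"
      unfolding ln_eq by (simp add: algebra_simps)
  qed
  finally show ?thesis by linarith
qed

lemma entropy_pair_le_log_card:
  fixes f :: "'w \<Rightarrow> 'x"
  assumes nbhd: "\<And>w. w \<in> S \<Longrightarrow> f w \<in> N (g w)" and finite_N: "\<And>y. finite (N y)"
    and card_N: "\<And>y. card (N y) \<le> K" and K_pos: "K > 0"
  shows "entropy (\<lambda>w. (f w, g w)) \<le> entropy g + ln (real K)"
proof -
  define Pg where "Pg b = sum p {w\<in>S. g w = b}" for b
  define Q where "Q = (\<lambda>(a::'x, b). Pg b / real K)"
  have fin_img: "finite (g ` S)" using finite_support by auto
  have "sum Q ((\<lambda>w. (f w, g w)) ` S) \<le> sum Q ((\<lambda>(b, a). (a, b)) ` Sigma (g ` S) N)"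
    using fin_img finite_N nbhd unfolding Q_def Pg_def
    by (intro sum_mono2) (auto intro!: divide_nonneg_nonneg sum_nonneg weight_nonneg)
  also have "\<dots> = (\<Sum>b\<in>g ` S. \<Sum>a\<in>N b. Q (a, b))"
    by (subst sum.reindex) (auto simp: inj_on_def case_prod_unfold sum.Sigma fin_img finite_N)
  also have "\<dots> = (\<Sum>b\<in>g ` S. real (card (N b)) / real K * Pg b)"
    by (simp add: Q_def)
  also have "\<dots> \<le> (\<Sum>b\<in>g ` S. Pg b)"
    using card_N K_pos unfolding Pg_def
    by (intro sum_mono mult_left_le_one_le sum_nonneg weight_nonneg) auto
  also have "\<dots> = 1"
    unfolding Pg_def by (simp add: sum_weight_fibers fin_img sum_weight)
  finally have "entropy (\<lambda>w. (f w, g w)) \<le> (\<Sum>w\<in>S. p w * - ln (Q (f w, g w)))"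
    using K_pos fiber_prob_pos[of _ g]
    by (intro entropy_le_cross_entropy[where Q = Q and h = "\<lambda>w. (f w, g w)"])
      (simp_all add: Q_def Pg_def fiber_prob_def)
  also have "\<dots> = entropy g + ln (real K)"
  proof -
    have "(\<Sum>w\<in>S. p w * - ln (Q (f w, g w)))
        = (\<Sum>w\<in>S. p w * - ln (fiber_prob g w) + p w * ln (real K))"
    proof (rule sum.cong[OF refl])
      fix w assume "w \<in> S"
      thus "p w * - ln (Q (f w, g w)) = p w * - ln (fiber_prob g w) + p w * ln (real K)"
        using fiber_prob_pos[of w g] K_pos
        by (simp add: Q_def Pg_def fiber_prob_def[symmetric] ln_div algebra_simps)
    qed
    thus ?thesis
      unfolding entropy_def sum.distrib sum_distrib_right[symmetric] sum_weight by simp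
  qed
  finally show ?thesis .
qed

lemma entropy_pair_indep:
  assumes "\<And>w. w \<in> S \<Longrightarrow> fiber_prob (\<lambda>w. (f w, g w)) w = fiber_prob f w * fiber_prob g w"
  shows "entropy (\<lambda>w. (f w, g w)) = entropy f + entropy g"
  unfolding entropy_def sum.distrib[symmetric]
proof (rule sum.cong[OF refl])
  fix w assume "w \<in> S"
  thus "p w * - ln (fiber_prob (\<lambda>w. (f w, g w)) w)
      = p w * - ln (fiber_prob f w) + p w * - ln (fiber_prob g w)"
    using fiber_prob_pos[of w f] fiber_prob_pos[of w g] by (simp add: assms ln_mult algebra_simps)
qed

end

context fin_distr
begin

lemma mutual_info_nonneg: "mutual_info f g \<ge> 0"
proof -
  have "entropy (\<lambda>w. (f w, g w, ())) + entropy (\<lambda>_. ())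
      \<le> entropy (\<lambda>w. (f w, ())) + entropy (\<lambda>w. (g w, ()))"
    by (rule entropy_submodular)
  moreover have "entropy (\<lambda>w. (f w, g w, ())) = entropy (\<lambda>w. (f w, g w))"
    by (rule entropy_cong) simp
  moreover have "entropy (\<lambda>w. (f w, ())) = entropy f" "entropy (\<lambda>w. (g w, ())) = entropy g"
    by (rule entropy_cong, simp)+
  ultimately show ?thesis unfolding mutual_info_def by (simp add: entropy_const)
qed

lemma mutual_info_commute: "mutual_info f g = mutual_info g f"
proof -
  have "entropy (\<lambda>w. (f w, g w)) = entropy (\<lambda>w. (g w, f w))"
    by (rule entropy_cong) auto
  thus ?thesis unfolding mutual_info_def by simp
qed

lemma mutual_info_mono_right:
  assumes "\<And>w w'. w \<in> S \<Longrightarrow> w' \<in> S \<Longrightarrow> h w' = h w \<Longrightarrow> h' w' = h' w"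
  shows "mutual_info f h' \<le> mutual_info f h"
proof -
  have "entropy (\<lambda>w. (f w, h w, h' w)) + entropy h'
      \<le> entropy (\<lambda>w. (f w, h' w)) + entropy (\<lambda>w. (h w, h' w))"
    by (rule entropy_submodular)
  moreover have "entropy (\<lambda>w. (f w, h w, h' w)) = entropy (\<lambda>w. (f w, h w))"
    by (rule entropy_cong) (metis assms prod.inject)
  moreover have "entropy (\<lambda>w. (h w, h' w)) = entropy h"
    by (rule entropy_cong) (metis assms prod.inject)
  ultimately show ?thesis unfolding mutual_info_def by linarith
qed

lemma mutual_info_mono_left:
  assumes "\<And>w w'. w \<in> S \<Longrightarrow> w' \<in> S \<Longrightarrow> f w' = f w \<Longrightarrow> f' w' = f' w"
  shows "mutual_info f' h \<le> mutual_info f h"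
proof -
  have "mutual_info h f' \<le> mutual_info h f"
    by (rule mutual_info_mono_right) (use assms in blast)
  thus ?thesis by (simp only: mutual_info_commute[of h])
qed

lemma mutual_info_cong_left:
  assumes "\<And>w w'. w \<in> S \<Longrightarrow> w' \<in> S \<Longrightarrow> f' w' = f' w \<longleftrightarrow> f w' = f w"
  shows "mutual_info f' h = mutual_info f h"
  by (rule antisym; rule mutual_info_mono_left) (use assms in blast)+

lemma mutual_info_cong_right:
  assumes "\<And>w w'. w \<in> S \<Longrightarrow> w' \<in> S \<Longrightarrow> h' w' = h' w \<longleftrightarrow> h w' = h w"
  shows "mutual_info f h' = mutual_info f h"
proof -
  have "mutual_info h' f = mutual_info h f"
    by (rule mutual_info_cong_left) (use assms in blast)
  thus ?thesis by (simp only: mutual_info_commute[of _ f])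
qed

lemma mutual_info_le_add_log_card:
  assumes "\<And>w. w \<in> S \<Longrightarrow> f w \<in> N (g w)" "\<And>y. finite (N y)" "\<And>y. card (N y) \<le> K" "K > 0"
  shows "mutual_info f h \<le> mutual_info g h + ln (real K)"
proof -
  have "mutual_info f h \<le> mutual_info (\<lambda>w. (f w, g w)) h"
    by (rule mutual_info_mono_left) auto
  moreover have "entropy (\<lambda>w. (f w, g w)) \<le> entropy g + ln (real K)"
    by (rule entropy_pair_le_log_card[where N = N]) (use assms in auto)
  moreover have "entropy (\<lambda>w. (g w, h w)) \<le> entropy (\<lambda>w. ((f w, g w), h w))"
    by (rule entropy_mono) auto
  ultimately show ?thesis unfolding mutual_info_def by linarith
qed

lemma mutual_info_pair_ge_indep:
  assumes "entropy (\<lambda>w. (f w, g w)) = entropy f + entropy g"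
  shows "mutual_info f h + mutual_info g h \<le> mutual_info (\<lambda>w. (f w, g w)) h"
proof -
  have "entropy (\<lambda>w. (f w, g w, h w)) + entropy h
      \<le> entropy (\<lambda>w. (f w, h w)) + entropy (\<lambda>w. (g w, h w))"
    by (rule entropy_submodular)
  moreover have "entropy (\<lambda>w. ((f w, g w), h w)) = entropy (\<lambda>w. (f w, g w, h w))"
    by (rule entropy_cong) auto
  ultimately show ?thesis using assms unfolding mutual_info_def by linarith
qed

lemma mutual_info_le_log_card_indep:
  assumes "entropy (\<lambda>w. (f w, g w)) = entropy f + entropy g"
    and "\<And>w. w \<in> S \<Longrightarrow> g' w \<in> N (g w)" "\<And>y. finite (N y)" "\<And>y. card (N y) \<le> K" "K > 0"
  shows "mutual_info f (\<lambda>w. (g' w, g w)) \<le> ln (real K)"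
proof -
  have "entropy (\<lambda>w. (g' w, g w)) \<le> entropy g + ln (real K)"
    by (rule entropy_pair_le_log_card[where N = N]) (use assms in auto)
  moreover have "entropy (\<lambda>w. (f w, g w)) \<le> entropy (\<lambda>w. (f w, g' w, g w))"
    by (rule entropy_mono) auto
  ultimately show ?thesis using assms(1) unfolding mutual_info_def by linarith
qed

definition mutually_indep :: "'i set \<Rightarrow> ('i \<Rightarrow> 'w \<Rightarrow> 'x) \<Rightarrow> bool" where
  "mutually_indep I X \<longleftrightarrow> (\<forall>J\<subseteq>I. \<forall>w\<in>S.
     fiber_prob (\<lambda>w. restrict (\<lambda>j. X j w) J) w = (\<Prod>j\<in>J. fiber_prob (X j) w))"

lemma entropy_restrict_indep:
  assumes indep: "mutually_indep I X" and "finite I"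
    and J: "J1 \<subseteq> I" "J2 \<subseteq> I" "J1 \<inter> J2 = {}"
  shows "entropy (\<lambda>w. (restrict (\<lambda>j. X j w) J1, restrict (\<lambda>j. X j w) J2))
       = entropy (\<lambda>w. restrict (\<lambda>j. X j w) J1) + entropy (\<lambda>w. restrict (\<lambda>j. X j w) J2)"
proof -
  have fin: "finite J1" "finite J2"
    using finite_subset[OF J(1) \<open>finite I\<close>] finite_subset[OF J(2) \<open>finite I\<close>] .
  have prod_formula: "fiber_prob (\<lambda>w. restrict (\<lambda>j. X j w) J) w = (\<Prod>j\<in>J. fiber_prob (X j) w)"
    if "J \<subseteq> I" "w \<in> S" for J w
    using indep that unfolding mutually_indep_def by simp
  show ?thesis
  proof (rule entropy_pair_indep)
    fix w assume w: "w \<in> S"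
    have "fiber_prob (\<lambda>w. (restrict (\<lambda>j. X j w) J1, restrict (\<lambda>j. X j w) J2)) w
        = fiber_prob (\<lambda>w. restrict (\<lambda>j. X j w) (J1 \<union> J2)) w"
      by (rule fiber_prob_cong) (auto simp: restrict_eq_restrict_iff)
    also have "\<dots> = (\<Prod>j\<in>J1 \<union> J2. fiber_prob (X j) w)"
      using J w by (intro prod_formula) auto
    also have "\<dots> = (\<Prod>j\<in>J1. fiber_prob (X j) w) * (\<Prod>j\<in>J2. fiber_prob (X j) w)"
      using fin J(3) by (rule prod.union_disjoint)
    finally show "fiber_prob (\<lambda>w. (restrict (\<lambda>j. X j w) J1, restrict (\<lambda>j. X j w) J2)) w
        = fiber_prob (\<lambda>w. restrict (\<lambda>j. X j w) J1) w * fiber_prob (\<lambda>w. restrict (\<lambda>j. X j w) J2) w"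
      unfolding prod_formula[OF J(1) w] prod_formula[OF J(2) w] .
  qed
qed

lemma mutual_info_sum_le_indep:
  assumes indep: "mutually_indep I X" and "finite I" and "F \<subseteq> I"
  shows "(\<Sum>i\<in>F. mutual_info (X i) h) \<le> mutual_info (\<lambda>w. restrict (\<lambda>j. X j w) F) h"
proof -
  have "finite F" using finite_subset[OF \<open>F \<subseteq> I\<close> \<open>finite I\<close>] .
  thus ?thesis using \<open>F \<subseteq> I\<close>
  proof (induction F rule: finite_induct)
    case empty
    show ?case by (simp add: mutual_info_nonneg)
  next
    case (insert a F)
    have "entropy (\<lambda>w. (restrict (\<lambda>j. X j w) F, restrict (\<lambda>j. X j w) {a}))
        = entropy (\<lambda>w. restrict (\<lambda>j. X j w) F) + entropy (\<lambda>w. restrict (\<lambda>j. X j w) {a})"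
      using insert by (intro entropy_restrict_indep[OF indep \<open>finite I\<close>]) auto
    moreover have "entropy (\<lambda>w. (restrict (\<lambda>j. X j w) F, restrict (\<lambda>j. X j w) {a}))
        = entropy (\<lambda>w. (restrict (\<lambda>j. X j w) F, X a w))"
      "entropy (\<lambda>w. restrict (\<lambda>j. X j w) {a}) = entropy (X a)"
      by (rule entropy_cong; auto simp: restrict_eq_restrict_iff)+
    ultimately have "mutual_info (\<lambda>w. restrict (\<lambda>j. X j w) F) h + mutual_info (X a) h
        \<le> mutual_info (\<lambda>w. (restrict (\<lambda>j. X j w) F, X a w)) h"
      by (intro mutual_info_pair_ge_indep) simp
    also have "\<dots> = mutual_info (\<lambda>w. restrict (\<lambda>j. X j w) (insert a F)) h"
      by (rule mutual_info_cong_left) (auto simp: restrict_eq_restrict_iff)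
    finally have "mutual_info (\<lambda>w. restrict (\<lambda>j. X j w) F) h + mutual_info (X a) h
        \<le> mutual_info (\<lambda>w. restrict (\<lambda>j. X j w) (insert a F)) h" .
    moreover have "(\<Sum>i\<in>F. mutual_info (X i) h) \<le> mutual_info (\<lambda>w. restrict (\<lambda>j. X j w) F) h"
      using insert.IH insert.prems by blast
    ultimately show ?case unfolding sum.insert[OF insert.hyps] by linarith
  qed
qed

lemma mutual_info_restrict_coupled_le:
  assumes indep: "mutually_indep I X" and I: "finite I" "B \<subseteq> I"
    and nbhd: "\<And>w b. w \<in> S \<Longrightarrow> b \<in> B \<Longrightarrow> Y b w \<in> N (X b w)"
    and finite_N: "\<And>x. finite (N x)" and card_N: "\<And>x. card (N x) \<le> K" and K: "K > 0"
  shows "mutual_info (\<lambda>w. restrict (\<lambda>j. X j w) (I - B))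
      (\<lambda>w. (restrict (\<lambda>b. Y b w) B, restrict (\<lambda>b. X b w) B)) \<le> real (card B) * ln (real K)"
proof -
  have finite_B: "finite B" using finite_subset[OF I(2,1)] .
  have "mutual_info (\<lambda>w. restrict (\<lambda>j. X j w) (I - B))
      (\<lambda>w. (restrict (\<lambda>b. Y b w) B, restrict (\<lambda>b. X b w) B)) \<le> ln (real (K ^ card B))"
  proof (rule mutual_info_le_log_card_indep[where N = "\<lambda>x. \<Pi>\<^sub>E b\<in>B. N (x b)"])
    show "entropy (\<lambda>w. (restrict (\<lambda>j. X j w) (I - B), restrict (\<lambda>b. X b w) B))
        = entropy (\<lambda>w. restrict (\<lambda>j. X j w) (I - B)) + entropy (\<lambda>w. restrict (\<lambda>b. X b w) B)"
      using I by (intro entropy_restrict_indep[OF indep]) auto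
    show "restrict (\<lambda>b. Y b w) B \<in> (\<Pi>\<^sub>E b\<in>B. N (restrict (\<lambda>b. X b w) B b))" if "w \<in> S" for w
      using nbhd[OF that] I by auto
    show "finite (\<Pi>\<^sub>E b\<in>B. N (x b))" for x
      using finite_B finite_N by (rule finite_PiE)
    show "card (\<Pi>\<^sub>E b\<in>B. N (x b)) \<le> K ^ card B" for x
      unfolding card_PiE[OF finite_B] using card_N K by (intro prod_le_power) auto
    show "K ^ card B > 0" using K by simp
  qed
  thus ?thesis by (simp add: ln_realpow)
qed

text \<open>\<open>X\<close> plays the i.i.d. sample and \<open>Y\<close> the coupled one. With \<open>Z = (Y_B, X_B)\<close>:
  \<open>I(Y_i; Y_B) \<le> ln K + I(X_i; Z)\<close> because \<open>Y_i\<close> takes at most \<open>K\<close> values given \<open>X_i\<close>;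
  \<open>\<Sum>_i I(X_i; Z) \<le> I(X_(I-B); Z)\<close> by independence of the \<open>X_i\<close>; and
  \<open>I(X_(I-B); Z) \<le> |B| ln K\<close> because \<open>X_(I-B)\<close> is independent of \<open>X_B\<close>.\<close>

lemma mutual_info_coupled_block_sum_le:
  assumes indep: "mutually_indep I X" and I: "finite I" "B \<subseteq> I"
    and nbhd: "\<And>w j. w \<in> S \<Longrightarrow> j \<in> I \<Longrightarrow> Y j w \<in> N (X j w)"
    and finite_N: "\<And>x. finite (N x)" and card_N: "\<And>x. card (N x) \<le> K" and K: "K > 0"
  shows "(\<Sum>i\<in>I - B. mutual_info (Y i) (\<lambda>w. restrict (\<lambda>b. Y b w) B))
    \<le> real (card I) * ln (real K)"
proof -
  define Z where "Z w = (restrict (\<lambda>b. Y b w) B, restrict (\<lambda>b. X b w) B)" for w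
  have "mutual_info (Y i) (\<lambda>w. restrict (\<lambda>b. Y b w) B) \<le> mutual_info (X i) Z + ln (real K)"
    if "i \<in> I" for i
  proof -
    have "mutual_info (Y i) (\<lambda>w. restrict (\<lambda>b. Y b w) B)
        \<le> mutual_info (X i) (\<lambda>w. restrict (\<lambda>b. Y b w) B) + ln (real K)"
      using nbhd that finite_N card_N K by (intro mutual_info_le_add_log_card[where N = N]) blast+
    moreover have "mutual_info (X i) (\<lambda>w. restrict (\<lambda>b. Y b w) B) \<le> mutual_info (X i) Z"
      by (rule mutual_info_mono_right) (auto simp: Z_def)
    ultimately show ?thesis by linarith
  qed
  hence "(\<Sum>i\<in>I - B. mutual_info (Y i) (\<lambda>w. restrict (\<lambda>b. Y b w) B))
      \<le> (\<Sum>i\<in>I - B. mutual_info (X i) Z + ln (real K))"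
    by (intro sum_mono) auto
  moreover have "(\<Sum>i\<in>I - B. mutual_info (X i) Z + ln (real K))
      = (\<Sum>i\<in>I - B. mutual_info (X i) Z) + real (card (I - B)) * ln (real K)"
    by (simp add: sum.distrib)
  moreover have "(\<Sum>i\<in>I - B. mutual_info (X i) Z) \<le> mutual_info (\<lambda>w. restrict (\<lambda>j. X j w) (I - B)) Z"
    by (rule mutual_info_sum_le_indep[OF indep I(1)]) auto
  moreover have "\<dots> \<le> real (card B) * ln (real K)"
    unfolding Z_def using nbhd I(2)
    by (intro mutual_info_restrict_coupled_le[where N = N, OF indep I _ finite_N card_N K]) blast
  moreover have "real (card (I - B)) * ln (real K) + real (card B) * ln (real K)
      = real (card I) * ln (real K)"
    using I finite_subset[OF I(2,1)]
    by (simp add: card_Diff_subset card_mono of_nat_diff flip: distrib_right)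
  ultimately show ?thesis by linarith
qed

end

section \<open>Finite support\<close>

lemma fin_distr_pmf: "finite (set_pmf c) \<Longrightarrow> fin_distr (set_pmf c) (pmf c)"
  by unfold_locales (auto simp: pmf_positive sum_pmf_eq_1)

lemma pmf_map_finite_support:
  assumes "finite (set_pmf c)"
  shows "pmf (map_pmf f c) v = sum (pmf c) {w\<in>set_pmf c. f w = v}"
proof -
  have "pmf (map_pmf f c) v = measure c (f -` {v} \<inter> set_pmf c)"
    by (simp add: pmf_map measure_Int_set_pmf)
  also have "\<dots> = sum (pmf c) (f -` {v} \<inter> set_pmf c)"
    by (rule measure_measure_pmf_finite) (use assms in auto)
  also have "f -` {v} \<inter> set_pmf c = {w\<in>set_pmf c. f w = v}" by auto
  finally show ?thesis .
qed

lemma fiber_prob_pmf: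
  assumes "finite (set_pmf c)"
  shows "fin_distr.fiber_prob (set_pmf c) (pmf c) f w = pmf (map_pmf f c) (f w)"
  unfolding fin_distr.fiber_prob_def[OF fin_distr_pmf[OF assms]] pmf_map_finite_support[OF assms] ..

lemma kl_term_nonneg:
  assumes "q \<ge> 0" "t \<ge> 0" "q > 0 \<Longrightarrow> t > 0"
  shows "kl_term q t \<ge> 0"
proof (cases "q = 0")
  case True thus ?thesis using assms by (simp add: kl_term_def)
next
  case False
  hence q: "q > 0" and t: "t > 0" using assms by auto
  have "ln (t / q) \<le> t / q - 1" by (rule ln_le_minus_one) (use q t in simp)
  hence "q * ln (t / q) \<le> q * (t / q - 1)" using q by (intro mult_left_mono) auto
  also have "\<dots> = t - q" using q by (simp add: field_simps)
  finally show ?thesis using False q t by (simp add: kl_term_def ln_div algebra_simps)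
qed

text \<open>For finite support the correction terms \<open>- q + a b\<close> in \<open>kl_term\<close> sum to zero.\<close>

lemma mutual_info_pmf_finite:
  fixes P :: "('x \<times> 'y) pmf"
  assumes fin: "finite (set_pmf P)"
  defines "t z \<equiv> pmf (map_pmf fst P) (fst z) * pmf (map_pmf snd P) (snd z)"
  shows "mutual_info_pmf P = ennreal (\<Sum>z\<in>set_pmf P. pmf P z * ln (pmf P z / t z))"
proof -
  define A where "A = fst ` set_pmf P \<times> snd ` set_pmf P"
  have fin_A: "finite A" and P_A: "set_pmf P \<subseteq> A" unfolding A_def using fin by force+
  have t_pos: "t z > 0" if "z \<in> set_pmf P" for z
    unfolding t_def using that by (auto intro!: mult_pos_pos simp: pmf_positive)
  have t_zero: "t z = 0" if "z \<notin> A" for z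
  proof -
    have "fst z \<notin> fst ` set_pmf P \<or> snd z \<notin> snd ` set_pmf P"
      using that unfolding A_def by (auto simp: mem_Times_iff)
    thus ?thesis unfolding t_def by (auto simp: pmf_eq_0_set_pmf)
  qed
  have kl_nonneg: "kl_term (pmf P z) (t z) \<ge> 0" for z
    using t_pos[of z] by (intro kl_term_nonneg) (auto simp: t_def set_pmf_iff)
  have "(\<Sum>z\<in>A. t z)
      = (\<Sum>a\<in>fst ` set_pmf P. pmf (map_pmf fst P) a) * (\<Sum>b\<in>snd ` set_pmf P. pmf (map_pmf snd P) b)"
    unfolding A_def t_def sum_product sum.cartesian_product by (simp add: case_prod_unfold)
  hence sum_t: "(\<Sum>z\<in>A. t z) = 1"
    using fin by (simp add: sum_pmf_eq_1)
  have "mutual_info_pmf P = (\<Sum>z\<in>A. ennreal (kl_term (pmf P z) (t z)))"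
    unfolding mutual_info_pmf_def t_def[symmetric]
    by (rule nn_integral_count_space'[OF fin_A])
      (auto simp: t_zero kl_term_def set_pmf_iff[symmetric] dest: subsetD[OF P_A])
  also have "\<dots> = ennreal (\<Sum>z\<in>A. kl_term (pmf P z) (t z))"
    using kl_nonneg by (simp add: sum_ennreal)
  also have "(\<Sum>z\<in>A. kl_term (pmf P z) (t z))
      = (\<Sum>z\<in>A. (if pmf P z = 0 then 0 else pmf P z * ln (pmf P z / t z)) - pmf P z + t z)"
    by (rule sum.cong) (auto simp: kl_term_def)
  also have "\<dots> = (\<Sum>z\<in>A. if pmf P z = 0 then 0 else pmf P z * ln (pmf P z / t z))
        - (\<Sum>z\<in>A. pmf P z) + (\<Sum>z\<in>A. t z)"
    by (simp add: sum.distrib sum_subtractf)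
  also have "(\<Sum>z\<in>A. if pmf P z = 0 then 0 else pmf P z * ln (pmf P z / t z))
      = (\<Sum>z\<in>set_pmf P. pmf P z * ln (pmf P z / t z))"
    by (rule sum.mono_neutral_cong_right[OF fin_A P_A]) (auto simp: set_pmf_iff)
  finally show ?thesis using sum_pmf_eq_1[OF fin_A P_A] sum_t by simp
qed

lemma mutual_info_pmf_map_pmf:
  assumes fin: "finite (set_pmf c)"
  shows "mutual_info_pmf (map_pmf (\<lambda>w. (f w, g w)) c)
    = ennreal (fin_distr.mutual_info (set_pmf c) (pmf c) f g)"
proof -
  interpret fin_distr "set_pmf c" "pmf c" by (rule fin_distr_pmf[OF fin])
  define h where "h w = (f w, g w)" for w
  define t where "t z = pmf (map_pmf f c) (fst z) * pmf (map_pmf g c) (snd z)" for z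
  have "mutual_info_pmf (map_pmf h c)
      = ennreal (\<Sum>z\<in>h ` set_pmf c. pmf (map_pmf h c) z * ln (pmf (map_pmf h c) z / t z))"
    using mutual_info_pmf_finite[of "map_pmf h c"] fin
    by (simp add: map_pmf_comp h_def t_def)
  also have "(\<Sum>z\<in>h ` set_pmf c. pmf (map_pmf h c) z * ln (pmf (map_pmf h c) z / t z))
      = (\<Sum>w\<in>set_pmf c. pmf c w * ln (fiber_prob h w / (fiber_prob f w * fiber_prob g w)))"
    using sum_regroup_fibers[of "\<lambda>z. ln (pmf (map_pmf h c) z / t z)" h]
    by (simp add: pmf_map_finite_support[OF fin] fiber_prob_pmf[OF fin] t_def h_def)
  also have "\<dots> = mutual_info f g"
    unfolding mutual_info_def entropy_def sum_subtractf[symmetric] sum.distrib[symmetric] h_def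
  proof (rule sum.cong[OF refl])
    fix w assume w: "w \<in> set_pmf c"
    have ln_eq: "ln (fiber_prob (\<lambda>w. (f w, g w)) w / (fiber_prob f w * fiber_prob g w))
        = ln (fiber_prob (\<lambda>w. (f w, g w)) w) - ln (fiber_prob f w) - ln (fiber_prob g w)"
      using fiber_prob_pos[OF w, of f] fiber_prob_pos[OF w, of g]
        fiber_prob_pos[OF w, of "\<lambda>w. (f w, g w)"]
      by (simp add: ln_div ln_mult)
    show "pmf c w * ln (fiber_prob (\<lambda>w. (f w, g w)) w / (fiber_prob f w * fiber_prob g w))
        = pmf c w * - ln (fiber_prob f w) + pmf c w * - ln (fiber_prob g w)
          - pmf c w * - ln (fiber_prob (\<lambda>w. (f w, g w)) w)"
      unfolding ln_eq by (simp add: algebra_simps)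
  qed
  finally show ?thesis unfolding h_def .
qed

lemma replicate_pmf_Suc:
  "replicate_pmf (Suc n) p = map_pmf (\<lambda>(x, xs). x # xs) (pair_pmf p (replicate_pmf n p))"
  by (simp add: pair_pmf_def map_bind_pmf map_return_pmf)

lemma measure_pair_pmf_Times:
  "measure_pmf.prob (pair_pmf M N) (A \<times> B) = measure_pmf.prob M A * measure_pmf.prob N B"
proof -
  have "measure_pmf.prob (pair_pmf M N) (A \<times> B)
      = measure_pmf.prob (pair_pmf M N) ((A \<inter> set_pmf M) \<times> (B \<inter> set_pmf N))"
    by (subst measure_Int_set_pmf[symmetric]) (simp add: Times_Int_Times)
  also have "\<dots> = measure_pmf.prob M (A \<inter> set_pmf M) * measure_pmf.prob N (B \<inter> set_pmf N)"
    by (rule measure_pmf_prob_product) (auto intro: countable_subset[OF _ countable_set_pmf])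
  finally show ?thesis by (simp add: measure_Int_set_pmf)
qed

lemma measure_replicate_pmf_cylinder:
  assumes "J \<subseteq> {..<m}"
  shows "measure_pmf.prob (replicate_pmf m D) {xs. \<forall>j\<in>J. xs ! j = v j} = (\<Prod>j\<in>J. pmf D (v j))"
  using assms
proof (induction m arbitrary: J v)
  case 0
  thus ?case by simp
next
  case (Suc m)
  define J' where "J' = {j. Suc j \<in> J}"
  define A0 where "A0 = (if 0 \<in> J then {v 0} else UNIV)"
  have J': "J' \<subseteq> {..<m}" using Suc.prems unfolding J'_def by auto
  have fin_J: "finite J" using finite_subset[OF Suc.prems] by simp
  have preimage: "(\<lambda>(x, xs). x # xs) -` {xs. \<forall>j\<in>J. xs ! j = v j}
      = A0 \<times> {xs. \<forall>j\<in>J'. xs ! j = v (Suc j)}"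
    unfolding A0_def J'_def by (auto simp: nth_Cons split: nat.splits)
  have "measure_pmf.prob (replicate_pmf (Suc m) D) {xs. \<forall>j\<in>J. xs ! j = v j}
      = measure_pmf.prob (pair_pmf D (replicate_pmf m D)) (A0 \<times> {xs. \<forall>j\<in>J'. xs ! j = v (Suc j)})"
    unfolding replicate_pmf_Suc measure_map_pmf preimage ..
  also have "\<dots> = measure_pmf.prob D A0 * (\<Prod>j\<in>J'. pmf D (v (Suc j)))"
    using Suc.IH[OF J'] by (simp add: measure_pair_pmf_Times)
  also have "(\<Prod>j\<in>J'. pmf D (v (Suc j))) = (\<Prod>j\<in>J - {0}. pmf D (v j))"
  proof -
    have "J - {0} = Suc ` J'" unfolding J'_def by (auto simp: image_iff) (metis not0_implies_Suc)
    thus ?thesis by (simp add: prod.reindex)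
  qed
  also have "measure_pmf.prob D A0 * \<dots> = (\<Prod>j\<in>J. pmf D (v j))"
    unfolding A0_def using fin_J by (simp add: measure_pmf_single prod.remove)
  finally show ?case .
qed

lemma mutually_indep_replicate_pmf_coords:
  fixes c :: "'w pmf" and s :: "'w \<Rightarrow> 'b list"
  assumes fin: "finite (set_pmf c)" and s_c: "map_pmf s c = replicate_pmf m D"
  shows "fin_distr.mutually_indep (set_pmf c) (pmf c) {..<m} (\<lambda>j w. s w ! j)"
proof -
  interpret fin_distr "set_pmf c" "pmf c" by (rule fin_distr_pmf[OF fin])
  have cylinder: "fiber_prob (\<lambda>w. restrict (\<lambda>j. s w ! j) J) w = (\<Prod>j\<in>J. pmf D (s w ! j))"
    if "J \<subseteq> {..<m}" for J w
  proof -
    have "(\<lambda>w. restrict (\<lambda>j. s w ! j) J) -` {restrict (\<lambda>j. s w ! j) J}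
        = s -` {xs. \<forall>j\<in>J. xs ! j = s w ! j}"
      by (auto simp: restrict_eq_restrict_iff)
    hence "fiber_prob (\<lambda>w. restrict (\<lambda>j. s w ! j) J) w
        = measure_pmf.prob (map_pmf s c) {xs. \<forall>j\<in>J. xs ! j = s w ! j}"
      by (simp add: fiber_prob_pmf[OF fin] pmf_map measure_map_pmf)
    thus ?thesis unfolding s_c measure_replicate_pmf_cylinder[OF that] .
  qed
  show ?thesis
    unfolding mutually_indep_def
  proof (intro allI impI ballI)
    fix J w assume J: "J \<subseteq> {..<m}"
    have "fiber_prob (\<lambda>w. s w ! j) w = pmf D (s w ! j)" if "j \<in> J" for j
    proof -
      have "fiber_prob (\<lambda>w. s w ! j) w = fiber_prob (\<lambda>w. restrict (\<lambda>i. s w ! i) {j}) w"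
        by (rule fiber_prob_cong) (simp add: restrict_eq_restrict_iff)
      also have "\<dots> = pmf D (s w ! j)"
        using cylinder[of "{j}" w] J that by auto
      finally show ?thesis .
    qed
    thus "fiber_prob (\<lambda>w. restrict (\<lambda>j. s w ! j) J) w = (\<Prod>j\<in>J. fiber_prob (\<lambda>w. s w ! j) w)"
      unfolding cylinder[OF J] by simp
  qed
qed

lemma mutual_info_coord_block_sum_le_finite:
  fixes c :: "('b list \<times> 'b list) pmf"
  assumes fin: "finite (set_pmf c)" and snd_c: "map_pmf snd c = replicate_pmf m D"
    and nbhd: "\<And>w j. w \<in> set_pmf c \<Longrightarrow> j < m \<Longrightarrow> fst w ! j \<in> N (snd w ! j)"
    and finite_N: "\<And>x. finite (N x)" and card_N: "\<And>x. card (N x) \<le> d" and d: "d \<ge> 1"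
    and B: "B \<subseteq> {..<m}"
  shows "(\<Sum>i\<in>{..<m} - B. MI_coord_block (map_pmf fst c) i B) \<le> ennreal (real m * ln (real d))"
proof -
  interpret fin_distr "set_pmf c" "pmf c" by (rule fin_distr_pmf[OF fin])
  define Y where "Y j w = fst w ! j" for j and w :: "'b list \<times> 'b list"
  have MI_eq: "MI_coord_block (map_pmf fst c) i B
      = ennreal (mutual_info (Y i) (\<lambda>w. restrict (\<lambda>b. Y b w) B))" for i
  proof -
    have "MI_coord_block (map_pmf fst c) i B
        = ennreal (mutual_info (Y i) (\<lambda>w. map (\<lambda>b. Y b w) (sorted_list_of_set B)))"
      unfolding MI_coord_block_def map_pmf_comp Y_def
      by (rule mutual_info_pmf_map_pmf[OF fin])
    also have "mutual_info (Y i) (\<lambda>w. map (\<lambda>b. Y b w) (sorted_list_of_set B))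
        = mutual_info (Y i) (\<lambda>w. restrict (\<lambda>b. Y b w) B)"
      using finite_subset[OF B]
      by (intro mutual_info_cong_right) (simp add: map_eq_conv restrict_eq_restrict_iff)
    finally show ?thesis .
  qed
  have "(\<Sum>i\<in>{..<m} - B. MI_coord_block (map_pmf fst c) i B)
      = ennreal (\<Sum>i\<in>{..<m} - B. mutual_info (Y i) (\<lambda>w. restrict (\<lambda>b. Y b w) B))"
    by (simp add: MI_eq sum_ennreal mutual_info_nonneg)
  also have "\<dots> \<le> ennreal (real (card {..<m}) * ln (real d))"
    using mutually_indep_replicate_pmf_coords[OF fin snd_c] nbhd finite_N card_N d B
    by (intro ennreal_leI mutual_info_coupled_block_sum_le[where N = N]) (auto simp: Y_def)
  finally show ?thesis by simp
qed

section \<open>Truncation to finite support\<close>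

lemma map_pmf_map_replicate_pmf:
  "map_pmf (map f) (replicate_pmf m D) = replicate_pmf m (map_pmf f D)"
proof (induction m)
  case 0 thus ?case by simp
next
  case (Suc m)
  have "map_pmf (map f) (replicate_pmf (Suc m) D)
      = map_pmf (\<lambda>(x, xs). x # xs) (map_pmf (\<lambda>(a, b). (f a, map f b)) (pair_pmf D (replicate_pmf m D)))"
    unfolding replicate_pmf_Suc map_pmf_comp by (simp add: case_prod_unfold)
  also have "\<dots> = replicate_pmf (Suc m) (map_pmf f D)"
    unfolding map_pair Suc.IH replicate_pmf_Suc ..
  finally show ?case .
qed

lemma kl_term_ge_sqrt_diff_sq:
  assumes q: "q \<ge> 0" and t: "t > 0"
  shows "(sqrt q - sqrt t)^2 \<le> kl_term q t"
proof (cases "q = 0")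
  case True thus ?thesis using t by (simp add: kl_term_def)
next
  case False
  hence q: "q > 0" using q by simp
  define u where "u = sqrt (t / q)"
  have u: "u > 0" unfolding u_def using q t by simp
  have "ln (t / q) = 2 * ln u" unfolding u_def using q t by (simp add: ln_sqrt)
  also have "\<dots> \<le> 2 * (u - 1)" using ln_le_minus_one[OF u] by simp
  finally have "q * ln (t / q) \<le> q * (2 * (u - 1))" using q by (intro mult_left_mono) auto
  moreover have "q * u = sqrt q * sqrt t"
  proof -
    have "q * u = (sqrt q * sqrt q) * (sqrt t / sqrt q)" unfolding u_def using q
      by (simp add: real_sqrt_divide real_sqrt_mult_self)
    also have "\<dots> = sqrt q * sqrt t" using q by (simp add: field_simps)
    finally show ?thesis .
  qed
  moreover have "ln (q / t) = - ln (t / q)" using q t by (simp add: ln_div)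
  moreover have "(sqrt q - sqrt t)^2 = q - 2 * (sqrt q * sqrt t) + t"
    using q t by (simp add: power2_diff)
  ultimately show ?thesis using False by (simp add: kl_term_def algebra_simps)
qed

lemma kl_term_le:
  assumes q: "q \<ge> 0" and t: "t > 0"
  shows "kl_term q t \<le> q^2 / t - 2 * q + t"
proof (cases "q = 0")
  case True thus ?thesis by (simp add: kl_term_def)
next
  case False
  hence q: "q > 0" using q by simp
  have "ln (q / t) \<le> q / t - 1" by (rule ln_le_minus_one) (use q t in simp)
  hence "q * ln (q / t) \<le> q * (q / t - 1)" using q by (intro mult_left_mono) auto
  also have "\<dots> = q^2 / t - q" by (simp add: power2_eq_square field_simps)
  finally show ?thesis using False by (simp add: kl_term_def)
qed

text \<open>At \<open>q = 0\<close> the defining formula of \<open>kl_term\<close> changes, so continuity there is obtained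
  by squeezing between the two bounds above, which coincide at \<open>q = 0\<close>.\<close>

lemma tendsto_kl_term:
  fixes qn tn :: "nat \<Rightarrow> real"
  assumes qn: "qn \<longlonglongrightarrow> q" and tn: "tn \<longlonglongrightarrow> t" and t: "t > 0"
    and qn_nonneg: "\<And>n. qn n \<ge> 0" and q: "q \<ge> 0"
  shows "(\<lambda>n. kl_term (qn n) (tn n)) \<longlonglongrightarrow> kl_term q t"
proof (cases "q = 0")
  case False
  hence qp: "q > 0" using q by simp
  have "eventually (\<lambda>n. qn n > 0) sequentially" using order_tendstoD(1)[OF qn qp] .
  hence "eventually (\<lambda>n. qn n * ln (qn n / tn n) - qn n + tn n = kl_term (qn n) (tn n)) sequentially"
    by eventually_elim (simp add: kl_term_def)
  moreover have "(\<lambda>n. qn n * ln (qn n / tn n) - qn n + tn n) \<longlonglongrightarrow> q * ln (q / t) - q + t"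
    using qp t by (intro tendsto_intros qn tn) auto
  ultimately show ?thesis using False by (simp add: kl_term_def tendsto_cong)
next
  case True
  have tn_pos: "eventually (\<lambda>n. tn n > 0) sequentially" using order_tendstoD(1)[OF tn t] .
  have lower: "(\<lambda>n. (sqrt (qn n) - sqrt (tn n))^2) \<longlonglongrightarrow> kl_term q t"
  proof -
    have "(\<lambda>n. (sqrt (qn n) - sqrt (tn n))^2) \<longlonglongrightarrow> (sqrt q - sqrt t)^2"
      by (intro tendsto_intros qn tn)
    thus ?thesis using True t by (simp add: kl_term_def)
  qed
  have upper: "(\<lambda>n. (qn n)^2 / tn n - 2 * qn n + tn n) \<longlonglongrightarrow> kl_term q t"
  proof -
    have "(\<lambda>n. (qn n)^2 / tn n - 2 * qn n + tn n) \<longlonglongrightarrow> q^2 / t - 2 * q + t"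
      using t by (intro tendsto_intros qn tn) auto
    thus ?thesis using True by (simp add: kl_term_def)
  qed
  show ?thesis
  proof (rule tendsto_sandwich[OF _ _ lower upper])
    show "eventually (\<lambda>n. (sqrt (qn n) - sqrt (tn n))^2 \<le> kl_term (qn n) (tn n)) sequentially"
      using tn_pos by eventually_elim (rule kl_term_ge_sqrt_diff_sq[OF qn_nonneg])
    show "eventually (\<lambda>n. kl_term (qn n) (tn n) \<le> (qn n)^2 / tn n - 2 * qn n + tn n) sequentially"
      using tn_pos by eventually_elim (rule kl_term_le[OF qn_nonneg])
  qed
qed

lemma sum_le_nn_integral_count_space:
  fixes F :: "'z \<Rightarrow> ennreal"
  assumes "finite A"
  shows "sum F A \<le> (\<integral>\<^sup>+z. F z \<partial>count_space UNIV)"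
proof -
  have "sum F A = (\<integral>\<^sup>+z. F z * indicator A z \<partial>count_space UNIV)"
    by (subst nn_integral_count_space'[OF assms]) auto
  also have "\<dots> \<le> (\<integral>\<^sup>+z. F z \<partial>count_space UNIV)"
    by (rule nn_integral_mono) (auto simp: indicator_def)
  finally show ?thesis .
qed

lemma nn_integral_count_space_le_of_finite_sums:
  fixes F :: "'z::countable \<Rightarrow> ennreal"
  assumes "\<And>Z. finite Z \<Longrightarrow> sum F Z \<le> R"
  shows "(\<integral>\<^sup>+z. F z \<partial>count_space UNIV) \<le> R"
proof -
  define E where "E n = (to_nat -` {..n} :: 'z set)" for n
  have finite_E: "finite (E n)" for n
    unfolding E_def by (simp add: finite_vimageI)
  have "(\<integral>\<^sup>+z. F z \<partial>count_space UNIV) = (\<integral>\<^sup>+z. (SUP n. F z * indicator (E n) z) \<partial>count_space UNIV)"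
  proof (rule nn_integral_cong)
    fix z
    show "F z = (SUP n. F z * indicator (E n) z)"
      by (rule antisym, rule SUP_upper2[of "to_nat z"])
        (auto simp: E_def indicator_def intro!: SUP_least)
  qed
  also have "\<dots> = (SUP n. \<integral>\<^sup>+z. F z * indicator (E n) z \<partial>count_space UNIV)"
    by (rule nn_integral_monotone_convergence_SUP)
      (auto simp: incseq_def le_fun_def E_def indicator_def)
  also have "\<dots> \<le> R"
  proof (rule SUP_least)
    fix n
    have "(\<integral>\<^sup>+z. F z * indicator (E n) z \<partial>count_space UNIV) = sum F (E n)"
      by (subst nn_integral_count_space'[OF finite_E[of n]]) auto
    thus "(\<integral>\<^sup>+z. F z * indicator (E n) z \<partial>count_space UNIV) \<le> R"
      using assms[OF finite_E] by simp
  qed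
  finally show ?thesis .
qed

text \<open>A Fatou-type bound: terms that vanish in the limit object impose no condition, and all
  other terms converge along the injection \<open>\<psi>\<close>.\<close>

lemma sum_nn_integral_le_of_tendsto:
  fixes F :: "'i \<Rightarrow> 'z::countable \<Rightarrow> ennreal" and Fn :: "nat \<Rightarrow> 'i \<Rightarrow> 'u \<Rightarrow> ennreal"
  assumes C: "finite C" and \<psi>: "inj \<psi>"
    and lim: "\<And>i z. i \<in> C \<Longrightarrow> F i z \<noteq> 0 \<Longrightarrow> (\<lambda>n. Fn n i (\<psi> z)) \<longlonglongrightarrow> F i z"
    and bound: "\<And>n. (\<Sum>i\<in>C. \<integral>\<^sup>+u. Fn n i u \<partial>count_space UNIV) \<le> R"
  shows "(\<Sum>i\<in>C. \<integral>\<^sup>+z. F i z \<partial>count_space UNIV) \<le> R"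
proof -
  have partial: "(\<Sum>z\<in>Z. \<Sum>i\<in>C. F i z) \<le> R" if Z: "finite Z" for Z
  proof -
    define K where "K = {iz \<in> C \<times> Z. F (fst iz) (snd iz) \<noteq> 0}"
    have K: "finite K" "K \<subseteq> C \<times> Z" unfolding K_def using C Z by auto
    have "(\<Sum>z\<in>Z. \<Sum>i\<in>C. F i z) = (\<Sum>iz\<in>C \<times> Z. F (fst iz) (snd iz))"
      by (subst sum.swap) (simp add: sum.cartesian_product case_prod_unfold)
    also have "\<dots> = (\<Sum>iz\<in>K. F (fst iz) (snd iz))"
      by (rule sum.mono_neutral_right) (use C Z K in \<open>auto simp: K_def\<close>)
    finally have sum_K: "(\<Sum>z\<in>Z. \<Sum>i\<in>C. F i z) = (\<Sum>iz\<in>K. F (fst iz) (snd iz))" .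
    have "(\<lambda>n. \<Sum>iz\<in>K. Fn n (fst iz) (\<psi> (snd iz))) \<longlonglongrightarrow> (\<Sum>iz\<in>K. F (fst iz) (snd iz))"
      by (rule tendsto_sum) (use lim in \<open>auto simp: K_def\<close>)
    moreover have "(\<Sum>iz\<in>K. Fn n (fst iz) (\<psi> (snd iz))) \<le> R" for n
    proof -
      have "(\<Sum>iz\<in>K. Fn n (fst iz) (\<psi> (snd iz))) \<le> (\<Sum>iz\<in>C \<times> Z. Fn n (fst iz) (\<psi> (snd iz)))"
        by (rule sum_mono2) (use C Z K in auto)
      also have "\<dots> = (\<Sum>i\<in>C. \<Sum>z\<in>Z. Fn n i (\<psi> z))"
        by (simp add: sum.cartesian_product case_prod_unfold)
      also have "\<dots> = (\<Sum>i\<in>C. \<Sum>u\<in>\<psi> ` Z. Fn n i u)"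
        by (simp add: sum.reindex[OF inj_on_subset[OF \<psi>]])
      also have "\<dots> \<le> (\<Sum>i\<in>C. \<integral>\<^sup>+u. Fn n i u \<partial>count_space UNIV)"
        by (intro sum_mono sum_le_nn_integral_count_space) (use Z in simp)
      finally show ?thesis using bound[of n] by simp
    qed
    ultimately show ?thesis unfolding sum_K
      by (intro tendsto_le[OF trivial_limit_sequentially tendsto_const]) auto
  qed
  have "(\<Sum>i\<in>C. \<integral>\<^sup>+z. F i z \<partial>count_space UNIV) = (\<integral>\<^sup>+z. (\<Sum>i\<in>C. F i z) \<partial>count_space UNIV)"
    by (rule nn_integral_sum[symmetric]) simp
  also have "\<dots> \<le> R"
    by (rule nn_integral_count_space_le_of_finite_sums) (rule partial)
  finally show ?thesis .
qed

lemma tendsto_measure_pmf_truncation: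
  fixes g :: "'j \<Rightarrow> 'w \<Rightarrow> nat"
  assumes "finite J"
  shows "(\<lambda>n. measure_pmf.prob c (E \<inter> {w. \<forall>j\<in>J. g j w \<le> n})) \<longlonglongrightarrow> measure_pmf.prob c E"
proof -
  have "(\<Union>n. E \<inter> {w. \<forall>j\<in>J. g j w \<le> n}) = E"
  proof (intro set_eqI iffI)
    fix w assume "w \<in> E"
    hence "w \<in> E \<inter> {w. \<forall>j\<in>J. g j w \<le> Max (insert 0 ((\<lambda>j. g j w) ` J))}"
      using assms by auto
    thus "w \<in> (\<Union>n. E \<inter> {w. \<forall>j\<in>J. g j w \<le> n})" by blast
  qed auto
  moreover have "(\<lambda>n. measure_pmf.prob c (E \<inter> {w. \<forall>j\<in>J. g j w \<le> n}))
      \<longlonglongrightarrow> measure_pmf.prob c (\<Union>n. E \<inter> {w. \<forall>j\<in>J. g j w \<le> n})"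
    by (rule measure_pmf.finite_Lim_measure_incseq) (auto simp: incseq_def)
  ultimately show ?thesis by simp
qed

definition mutual_info_density :: "('x \<times> 'y) pmf \<Rightarrow> 'x \<times> 'y \<Rightarrow> ennreal" where
  "mutual_info_density P z =
     ennreal (kl_term (pmf P z) (pmf (map_pmf fst P) (fst z) * pmf (map_pmf snd P) (snd z)))"

lemma mutual_info_pmf_eq_nn_integral:
  "mutual_info_pmf P = (\<integral>\<^sup>+z. mutual_info_density P z \<partial>count_space UNIV)"
  unfolding mutual_info_pmf_def mutual_info_density_def ..

text \<open>Here \<open>w = (S', S)\<close> is a pair of coupled samples.\<close>

definition masked :: "nat \<Rightarrow> 'a::countable list \<times> 'a list \<Rightarrow> nat \<Rightarrow> 'a option" where
  "masked n w j = (if to_nat (snd w ! j) \<le> n then Some (fst w ! j) else None)"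

lemma map_masked_eq_map_Some_iff:
  "map (masked n w) bs = map Some ys
    \<longleftrightarrow> (\<forall>b\<in>set bs. to_nat (snd w ! b) \<le> n) \<and> map (\<lambda>b. fst w ! b) bs = ys"
  by (induction bs arbitrary: ys) (auto simp: masked_def Cons_eq_map_conv)

lemma mutual_info_density_map_pmf:
  "mutual_info_density (map_pmf (\<lambda>w. (f w, g w)) c) (x, y)
    = ennreal (kl_term (measure_pmf.prob c {w. f w = x \<and> g w = y})
        (measure_pmf.prob c {w. f w = x} * measure_pmf.prob c {w. g w = y}))"
  unfolding mutual_info_density_def map_pmf_comp pmf_map by (simp add: vimage_def)

lemma tendsto_mutual_info_density_masked:
  fixes c :: "('a::countable list \<times> 'a list) pmf" and i :: nat and bs :: "nat list"
  defines "P \<equiv> map_pmf (\<lambda>w. (fst w ! i, map (\<lambda>b. fst w ! b) bs)) c"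
    and "Pn \<equiv> \<lambda>n. map_pmf (\<lambda>w. (masked n w i, map (masked n w) bs)) c"
  assumes nonzero: "mutual_info_density P (x, ys) \<noteq> 0"
  shows "(\<lambda>n. mutual_info_density (Pn n) (Some x, map Some ys)) \<longlonglongrightarrow> mutual_info_density P (x, ys)"
proof -
  define W where "W n J = {w :: 'a list \<times> 'a list. \<forall>j\<in>J. to_nat (snd w ! j) \<le> n}" for n J
  define q where "q E = measure_pmf.prob c E" for E
  define Eq where "Eq = {w :: 'a list \<times> 'a list. fst w ! i = x \<and> map (\<lambda>b. fst w ! b) bs = ys}"
  define Ea where "Ea = {w :: 'a list \<times> 'a list. fst w ! i = x}"
  define Eb where "Eb = {w :: 'a list \<times> 'a list. map (\<lambda>b. fst w ! b) bs = ys}"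
  have "{w. masked n w i = Some x \<and> map (masked n w) bs = map Some ys} = Eq \<inter> W n (insert i (set bs))"
    "{w. masked n w i = Some x} = Ea \<inter> W n {i}"
    "{w. map (masked n w) bs = map Some ys} = Eb \<inter> W n (set bs)" for n
    by (auto simp: masked_def map_masked_eq_map_Some_iff Eq_def Ea_def Eb_def W_def)
  hence masked_eq: "mutual_info_density (Pn n) (Some x, map Some ys)
    = ennreal (kl_term (q (Eq \<inter> W n (insert i (set bs)))) (q (Ea \<inter> W n {i}) * q (Eb \<inter> W n (set bs))))"
    for n
    unfolding Pn_def mutual_info_density_map_pmf q_def by simp
  have limit_eq: "mutual_info_density P (x, ys) = ennreal (kl_term (q Eq) (q Ea * q Eb))"
    unfolding P_def mutual_info_density_map_pmf q_def Eq_def Ea_def Eb_def ..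
  have "q Ea * q Eb > 0"
  proof (cases "q Eq = 0")
    case True
    thus ?thesis using nonzero unfolding limit_eq by (simp add: kl_term_def ennreal_eq_0_iff)
  next
    case False
    hence "q Eq > 0" unfolding q_def by (simp add: zero_less_measure_iff)
    moreover have "q Eq \<le> q Ea" "q Eq \<le> q Eb"
      unfolding q_def Eq_def Ea_def Eb_def by (auto intro!: measure_pmf.finite_measure_mono)
    ultimately show ?thesis by simp
  qed
  hence "(\<lambda>n. kl_term (q (Eq \<inter> W n (insert i (set bs)))) (q (Ea \<inter> W n {i}) * q (Eb \<inter> W n (set bs))))
      \<longlonglongrightarrow> kl_term (q Eq) (q Ea * q Eb)"
    unfolding q_def W_def
    by (intro tendsto_kl_term tendsto_mult tendsto_measure_pmf_truncation) simp_all
  thus ?thesis unfolding masked_eq limit_eq by (rule tendsto_ennrealI)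
qed

text \<open>The truncated coupling has finite support and satisfies the hypotheses of the finite case
  for the truncated sample distribution, with \<open>None\<close> as an extra point of degree one.\<close>

lemma mutual_info_coord_block_sum_le_masked:
  fixes c :: "('a::countable list \<times> 'a list) pmf"
  assumes snd_c: "map_pmf snd c = replicate_pmf m D"
    and nbhd: "\<And>w j. w \<in> set_pmf c \<Longrightarrow> j < m \<Longrightarrow> fst w ! j \<in> N (snd w ! j)"
    and finite_N: "\<And>x. finite (N x)" and card_N: "\<And>x. card (N x) \<le> d" and d: "d \<ge> 1"
    and B: "B \<subseteq> {..<m}"
  shows "(\<Sum>i\<in>{..<m} - B. MI_coord_block (map_pmf (\<lambda>w. map (masked n w) [0..<m]) c) i B)
    \<le> ennreal (real m * ln (real d))"
proof -
  define trunc where "trunc x = (if to_nat x \<le> n then Some x else None)" for x :: 'a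
  define G where "G w = (map (masked n w) [0..<m], map trunc (snd w))" for w
  define N' where "N' ox = (case ox of None \<Rightarrow> {None} | Some x \<Rightarrow> Some ` N x)" for ox
  have len: "length (snd w) = m" if "w \<in> set_pmf c" for w
    using that set_replicate_pmf[of m D] snd_c by (metis (mono_tags) mem_Collect_eq set_map_pmf imageI)
  have "finite (set_pmf (map_pmf G c))"
  proof -
    define F where "F = {x :: 'a. to_nat x \<le> n}"
    have "F = to_nat -` {..n}" unfolding F_def by auto
    hence finite_F: "finite F" by (simp add: finite_vimageI)
    define L where "L A = {xs. set xs \<subseteq> insert None (Some ` A) \<and> length xs = m}" for A :: "'a set"
    have "set_pmf (map_pmf G c) \<subseteq> L (\<Union>x\<in>F. N x) \<times> L F"
      using nbhd len by (fastforce simp: G_def L_def masked_def trunc_def F_def)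
    moreover have "finite (L A)" if "finite A" for A
      unfolding L_def using that by (intro finite_lists_length_eq) auto
    ultimately show ?thesis
      using finite_F finite_N by (meson finite_SigmaI finite_UN_I finite_subset)
  qed
  moreover have "map_pmf snd (map_pmf G c) = replicate_pmf m (map_pmf trunc D)"
    by (simp add: map_pmf_comp G_def flip: snd_c map_pmf_map_replicate_pmf)
  moreover have "fst w' ! j \<in> N' (snd w' ! j)" if w': "w' \<in> set_pmf (map_pmf G c)" and j: "j < m"
    for w' j
  proof -
    obtain w where w: "w \<in> set_pmf c" "w' = G w" using w' unfolding set_map_pmf by blast
    thus ?thesis using nbhd[OF w(1) j] len[OF w(1)] j
      by (auto simp: G_def N'_def masked_def trunc_def)
  qed
  moreover have "finite (N' ox)" "card (N' ox) \<le> d" for ox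
    unfolding N'_def using finite_N card_N d by (cases ox; simp add: card_image)+
  ultimately have "(\<Sum>i\<in>{..<m} - B. MI_coord_block (map_pmf fst (map_pmf G c)) i B)
      \<le> ennreal (real m * ln (real d))"
    using d B by (intro mutual_info_coord_block_sum_le_finite)
  thus ?thesis by (simp add: map_pmf_comp G_def)
qed

lemma mutual_info_coord_block_sum_le:
  fixes c :: "('a::countable list \<times> 'a list) pmf"
  assumes snd_c: "map_pmf snd c = replicate_pmf m D"
    and nbhd: "\<And>w j. w \<in> set_pmf c \<Longrightarrow> j < m \<Longrightarrow> fst w ! j \<in> N (snd w ! j)"
    and finite_N: "\<And>x. finite (N x)" and card_N: "\<And>x. card (N x) \<le> d" and d: "d \<ge> 1"
    and B: "B \<subseteq> {..<m}"
  shows "(\<Sum>i\<in>{..<m} - B. MI_coord_block (map_pmf fst c) i B) \<le> ennreal (real m * ln (real d))"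
proof -
  define bs where "bs = sorted_list_of_set B"
  define F where "F i = mutual_info_density (map_pmf (\<lambda>w. (fst w ! i, map (\<lambda>b. fst w ! b) bs)) c)"
    for i
  define Fn where "Fn n i = mutual_info_density (map_pmf (\<lambda>w. (masked n w i, map (masked n w) bs)) c)"
    for n i
  have set_bs: "set bs = B" unfolding bs_def using finite_subset[OF B] by simp
  have MI_eq: "MI_coord_block (map_pmf fst c) i B = (\<integral>\<^sup>+z. F i z \<partial>count_space UNIV)" for i
    unfolding MI_coord_block_def map_pmf_comp bs_def F_def mutual_info_pmf_eq_nn_integral ..
  have MI_masked_eq: "MI_coord_block (map_pmf (\<lambda>w. map (masked n w) [0..<m]) c) i B
      = (\<integral>\<^sup>+u. Fn n i u \<partial>count_space UNIV)" if "i \<in> {..<m} - B" for n i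
  proof -
    have "map_pmf (\<lambda>w. (map (masked n w) [0..<m] ! i, map (\<lambda>b. map (masked n w) [0..<m] ! b) bs)) c
        = map_pmf (\<lambda>w. (masked n w i, map (masked n w) bs)) c"
      using that B set_bs by (intro map_pmf_cong) auto
    thus ?thesis
      unfolding MI_coord_block_def map_pmf_comp bs_def[symmetric] mutual_info_pmf_eq_nn_integral Fn_def
      by simp
  qed
  have "(\<Sum>i\<in>{..<m} - B. \<integral>\<^sup>+z. F i z \<partial>count_space UNIV) \<le> ennreal (real m * ln (real d))"
  proof (rule sum_nn_integral_le_of_tendsto)
    show "inj (\<lambda>z. (Some (fst z), map Some (snd z)))"
      by (auto simp: inj_def map_injective prod_eq_iff)
    show "(\<lambda>n. Fn n i (Some (fst z), map Some (snd z))) \<longlonglongrightarrow> F i z" if "F i z \<noteq> 0" for i z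
      using tendsto_mutual_info_density_masked[where c = c and i = i and bs = bs and x = "fst z"
          and ys = "snd z"] that
      unfolding F_def Fn_def by simp
    show "(\<Sum>i\<in>{..<m} - B. \<integral>\<^sup>+u. Fn n i u \<partial>count_space UNIV) \<le> ennreal (real m * ln (real d))"
      for n
      using mutual_info_coord_block_sum_le_masked[OF assms, of n] MI_masked_eq by simp
  qed simp
  thus ?thesis by (simp add: MI_eq)
qed

section \<open>Cost functions and averaging\<close>

definition finite_cost_nbhd :: "('a \<Rightarrow> 'a \<Rightarrow> ennreal) \<Rightarrow> 'a \<Rightarrow> 'a set" where
  "finite_cost_nbhd \<rho> x = {y. \<rho> x y \<noteq> \<top>}"

lemma finite_cost_nbhd_bounded:
  assumes "cost_degree \<rho> = enat d"
  shows "finite (finite_cost_nbhd \<rho> x)" "card (finite_cost_nbhd \<rho> x) \<le> d"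
proof -
  have "(if finite (finite_cost_nbhd \<rho> x) then enat (card (finite_cost_nbhd \<rho> x)) else \<infinity>) \<le> enat d"
    unfolding assms[symmetric] cost_degree_def finite_cost_nbhd_def by (rule SUP_upper) simp
  thus "finite (finite_cost_nbhd \<rho> x)" "card (finite_cost_nbhd \<rho> x) \<le> d"
    by (auto split: if_splits)
qed

lemma cost_ball_nth_finite_cost_nbhd:
  assumes "S' \<in> cost_ball \<rho> m S" "j < m"
  shows "S' ! j \<in> finite_cost_nbhd \<rho> (S ! j)"
proof (rule ccontr)
  assume "S' ! j \<notin> finite_cost_nbhd \<rho> (S ! j)"
  hence "\<rho> (S ! j) (S' ! j) = \<top>" unfolding finite_cost_nbhd_def by simp
  moreover have "\<rho> (S ! j) (S' ! j) \<le> (\<Sum>i<m. \<rho> (S ! i) (S' ! i))"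
    by (rule member_le_sum) (use assms(2) in auto)
  ultimately have "(1 / of_nat m) * (\<Sum>i<m. \<rho> (S ! i) (S' ! i)) = (\<top> :: ennreal)"
    by (simp add: top_unique ennreal_mult_eq_top_iff ennreal_divide_eq_0_iff)
  thus False using assms(1) unfolding cost_ball_def by (simp add: top_unique)
qed

lemma adaptive_class_coupling:
  assumes "\<mu> \<in> adaptive_class m \<rho> D"
  obtains c where "map_pmf fst c = \<mu>" "map_pmf snd c = replicate_pmf m D"
    "\<And>w j. w \<in> set_pmf c \<Longrightarrow> j < m \<Longrightarrow> fst w ! j \<in> finite_cost_nbhd \<rho> (snd w ! j)"
  using assms unfolding adaptive_class_def by (fastforce intro: cost_ball_nth_finite_cost_nbhd)

lemma sum_subsets_avoiding_swap:
  fixes m r :: nat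
  shows "(\<Sum>i<m. \<Sum>B\<in>{B. B \<subseteq> {..<m} - {i} \<and> card B = r}. f i B)
    = (\<Sum>B\<in>{B. B \<subseteq> {..<m} \<and> card B = r}. \<Sum>i\<in>{..<m} - B. f i B)"
proof -
  have "(\<Sum>i<m. \<Sum>B\<in>{B. B \<subseteq> {..<m} - {i} \<and> card B = r}. f i B)
      = (\<Sum>i\<in>{..<m}. \<Sum>B\<in>{B. B \<in> {B. B \<subseteq> {..<m} \<and> card B = r} \<and> i \<notin> B}. f i B)"
    by (intro sum.cong) auto
  also have "\<dots> = (\<Sum>B\<in>{B. B \<subseteq> {..<m} \<and> card B = r}. \<Sum>i\<in>{i. i \<in> {..<m} \<and> i \<notin> B}. f i B)"
    using finite_subset[of "{B. B \<subseteq> {..<m} \<and> card B = r}" "Pow {..<m}"]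
    by (intro sum.swap_restrict) auto
  also have "\<dots> = (\<Sum>B\<in>{B. B \<subseteq> {..<m} \<and> card B = r}. \<Sum>i\<in>{..<m} - B. f i B)"
    by (intro sum.cong) auto
  finally show ?thesis .
qed

lemma inverse_of_nat_mult_le_ennreal:
  assumes "x \<le> ennreal y" "n > 0"
  shows "(1 / of_nat n) * x \<le> ennreal (y / real n)"
proof -
  have "1 / of_nat n = ennreal (1 / real n)"
    using assms(2) by (simp add: ennreal_of_nat_eq_real_of_nat divide_ennreal flip: ennreal_1)
  hence "(1 / of_nat n) * x \<le> ennreal (1 / real n) * ennreal y"
    using assms(1) by (simp add: mult_left_mono)
  also have "\<dots> \<le> ennreal (y / real n)"
    by (cases "y \<ge> 0") (auto simp: ennreal_mult'[symmetric] ennreal_neg)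
  finally show ?thesis .
qed

lemma average_over_subsets_avoiding_le:
  fixes f :: "nat \<Rightarrow> nat set \<Rightarrow> ennreal" and m r :: nat
  assumes r: "r < m"
    and bound: "\<And>B. B \<subseteq> {..<m} \<Longrightarrow> card B = r \<Longrightarrow> (\<Sum>i\<in>{..<m} - B. f i B) \<le> ennreal L"
  shows "(1 / of_nat m) * (\<Sum>i<m. (1 / of_nat ((m - 1) choose r)) *
      (\<Sum>B\<in>{B. B \<subseteq> {..<m} - {i} \<and> card B = r}. f i B)) \<le> ennreal (L / real (m - r))"
proof -
  have "(\<Sum>B\<in>{B. B \<subseteq> {..<m} \<and> card B = r}. \<Sum>i\<in>{..<m} - B. f i B)
      \<le> (\<Sum>B\<in>{B. B \<subseteq> {..<m} \<and> card B = r}. ennreal L)"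
    using bound by (intro sum_mono) auto
  also have "\<dots> \<le> ennreal (real (m choose r) * L)"
    by (cases "L \<ge> 0") (simp_all add: n_subsets ennreal_mult' ennreal_of_nat_eq_real_of_nat ennreal_neg)
  finally have inner: "(1 / of_nat ((m - 1) choose r)) *
      (\<Sum>i<m. \<Sum>B\<in>{B. B \<subseteq> {..<m} - {i} \<and> card B = r}. f i B)
      \<le> ennreal (real (m choose r) * L / real ((m - 1) choose r))"
    unfolding sum_subsets_avoiding_swap using r by (intro inverse_of_nat_mult_le_ennreal) auto
  have "(1 / of_nat m) * ((1 / of_nat ((m - 1) choose r)) *
      (\<Sum>i<m. \<Sum>B\<in>{B. B \<subseteq> {..<m} - {i} \<and> card B = r}. f i B))
      \<le> ennreal (real (m choose r) * L / real ((m - 1) choose r) / real m)"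
    using r by (intro inverse_of_nat_mult_le_ennreal[OF inner]) simp
  also have "real (m choose r) * L / real ((m - 1) choose r) / real m = L / real (m - r)"
  proof -
    have "real (m - r) * real (m choose r) = real m * real ((m - 1) choose r)"
      using binomial_absorb_comp[of m r] by (metis of_nat_mult)
    moreover have "real (m - r) > 0" "real ((m - 1) choose r) > 0" using r by simp_all
    ultimately show ?thesis using r by (simp add: field_simps)
  qed
  finally show ?thesis by (simp only: sum_distrib_left)
qed

theorem mainTheorem9:
  fixes D :: "'a::countable pmf"
    and \<rho> :: "'a \<Rightarrow> 'a \<Rightarrow> ennreal"
    and m r d :: nat
    and \<mu> :: "'a list pmf"
  assumes "cost_function \<rho>"
    and "cost_degree \<rho> = enat d" and "d \<ge> 1"
    and "m \<ge> 1"
    and "\<mu> \<in> adaptive_class m \<rho> D"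
    and "r < m"
  shows "(1 / of_nat m) * (\<Sum>i<m. (1 / of_nat ((m - 1) choose r)) *
            (\<Sum>B \<in> {B. B \<subseteq> {..<m} - {i} \<and> card B = r}. MI_coord_block \<mu> i B))
         \<le> ennreal (real m / real (m - r) * ln (real d))"
proof -
  obtain c where c: "map_pmf fst c = \<mu>" "map_pmf snd c = replicate_pmf m D"
    "\<And>w j. w \<in> set_pmf c \<Longrightarrow> j < m \<Longrightarrow> fst w ! j \<in> finite_cost_nbhd \<rho> (snd w ! j)"
    using adaptive_class_coupling[OF assms(5)] by blast
  have "(\<Sum>i\<in>{..<m} - B. MI_coord_block \<mu> i B) \<le> ennreal (real m * ln (real d))"
    if "B \<subseteq> {..<m}" for B
    unfolding c(1)[symmetric] using finite_cost_nbhd_bounded[OF assms(2)] assms(3) that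
    by (intro mutual_info_coord_block_sum_le[OF c(2,3)]) auto
  hence "(1 / of_nat m) * (\<Sum>i<m. (1 / of_nat ((m - 1) choose r)) *
      (\<Sum>B \<in> {B. B \<subseteq> {..<m} - {i} \<and> card B = r}. MI_coord_block \<mu> i B))
      \<le> ennreal (real m * ln (real d) / real (m - r))"
    using assms(6) by (intro average_over_subsets_avoiding_le) auto
  thus ?thesis by simp
qed

end
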